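(* Let $K$ be a field, $\kappa$ an infinite cardinal, $\mathcal R=(R_\alpha\mid\alpha<\kappa)$ a sequence of $K$-algebras, $P=\prod_{\alpha<\kappa}R_\alpha$ and $I=\bigoplus_{\alpha<\kappa}R_\alpha$. Let $R$ be a $K$-algebra containing an ideal $J$ which is isomorphic to $I$ as a $K$-algebra without unit, and assume there is a $K$-algebra isomorphism $R/J\cong K$. Then the $K$-algebras $R$ and $R(\kappa,K,\mathcal R)$ are isomorphic.
   Context: $R(\kappa,K,\mathcal R)$ denotes the $K$-subalgebra $I\oplus 1_P\cdot K$ of $P=\prod_{\alpha<\kappa}R_\alpha$, where $I=\bigoplus_{\alpha<\kappa}R_\alpha$. *)

theory Defs
  imports "HOL-Algebra.Algebra" "HOL-Library.FuncSet"
begin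

definition k_algebra :: "('k, 'm) ring_scheme \<Rightarrow> ('k, 'a) module \<Rightarrow> bool" where
  "k_algebra K M \<longleftrightarrow> field K \<and> ring M \<and> module K M \<and>
     (\<forall>a\<in>carrier K. \<forall>x\<in>carrier M. \<forall>y\<in>carrier M.
        (a \<odot>\<^bsub>M\<^esub> x) \<otimes>\<^bsub>M\<^esub> y = a \<odot>\<^bsub>M\<^esub> (x \<otimes>\<^bsub>M\<^esub> y) \<and>
        x \<otimes>\<^bsub>M\<^esub> (a \<odot>\<^bsub>M\<^esub> y) = a \<odot>\<^bsub>M\<^esub> (x \<otimes>\<^bsub>M\<^esub> y))"

definition alg_iso :: "('k, 'm) ring_scheme \<Rightarrow> ('k, 'a) module \<Rightarrow> ('k, 'b) module \<Rightarrow> ('a \<Rightarrow> 'b) set" where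
  "alg_iso K M N = {h. h \<in> ring_iso M N \<and>
     (\<forall>a\<in>carrier K. \<forall>x\<in>carrier M. h (a \<odot>\<^bsub>M\<^esub> x) = a \<odot>\<^bsub>N\<^esub> h x)}"

text \<open>Isomorphism of K-algebras without unit between subsets S of M and T of N
  (each carrying the operations of the ambient algebra).\<close>
definition nonunital_alg_iso ::
  "('k, 'm) ring_scheme \<Rightarrow> ('k, 'a) module \<Rightarrow> 'a set \<Rightarrow> ('k, 'b) module \<Rightarrow> 'b set \<Rightarrow> ('a \<Rightarrow> 'b) set" where
  "nonunital_alg_iso K M S N T = {h. bij_betw h S T \<and>
     (\<forall>x\<in>S. \<forall>y\<in>S. h (x \<oplus>\<^bsub>M\<^esub> y) = h x \<oplus>\<^bsub>N\<^esub> h y \<and>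
                   h (x \<otimes>\<^bsub>M\<^esub> y) = h x \<otimes>\<^bsub>N\<^esub> h y) \<and>
     (\<forall>a\<in>carrier K. \<forall>x\<in>S. h (a \<odot>\<^bsub>M\<^esub> x) = a \<odot>\<^bsub>N\<^esub> h x)}"

definition field_alg :: "('k, 'm) ring_scheme \<Rightarrow> ('k, 'k) module" where
  "field_alg K = \<lparr>carrier = carrier K, monoid.mult = monoid.mult K, one = one K,
     ring.zero = ring.zero K, ring.add = ring.add K, smult = monoid.mult K\<rparr>"

definition quot_alg :: "('k, 'm) ring_scheme \<Rightarrow> ('k, 'a) module \<Rightarrow> 'a set \<Rightarrow> ('k, 'a set) module" where
  "quot_alg K M J = \<lparr>carrier = carrier (M Quot J), monoid.mult = monoid.mult (M Quot J),
     one = one (M Quot J), ring.zero = ring.zero (M Quot J), ring.add = ring.add (M Quot J),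
     smult = (\<lambda>c Y. \<Union>y\<in>Y. a_r_coset M J (c \<odot>\<^bsub>M\<^esub> y))\<rparr>"

definition prod_alg :: "('k, 'm) ring_scheme \<Rightarrow> 'i set \<Rightarrow> ('i \<Rightarrow> ('k, 'a) module) \<Rightarrow> ('k, 'i \<Rightarrow> 'a) module" where
  "prod_alg K A Rs = \<lparr>carrier = (\<Pi>\<^sub>E \<alpha>\<in>A. carrier (Rs \<alpha>)),
     monoid.mult = (\<lambda>f g. \<lambda>\<alpha>\<in>A. f \<alpha> \<otimes>\<^bsub>Rs \<alpha>\<^esub> g \<alpha>),
     one = (\<lambda>\<alpha>\<in>A. \<one>\<^bsub>Rs \<alpha>\<^esub>),
     ring.zero = (\<lambda>\<alpha>\<in>A. \<zero>\<^bsub>Rs \<alpha>\<^esub>),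
     ring.add = (\<lambda>f g. \<lambda>\<alpha>\<in>A. f \<alpha> \<oplus>\<^bsub>Rs \<alpha>\<^esub> g \<alpha>),
     smult = (\<lambda>a f. \<lambda>\<alpha>\<in>A. a \<odot>\<^bsub>Rs \<alpha>\<^esub> f \<alpha>)\<rparr>"

definition dsum_set :: "'i set \<Rightarrow> ('i \<Rightarrow> ('k, 'a) module) \<Rightarrow> ('i \<Rightarrow> 'a) set" where
  "dsum_set A Rs = {f \<in> (\<Pi>\<^sub>E \<alpha>\<in>A. carrier (Rs \<alpha>)). finite {\<alpha>\<in>A. f \<alpha> \<noteq> \<zero>\<^bsub>Rs \<alpha>\<^esub>}}"

text \<open>R(\<kappa>,K,R) = I \<oplus> 1_P \<cdot> K, the K-subalgebra of P.\<close>
definition R_alg :: "('k, 'm) ring_scheme \<Rightarrow> 'i set \<Rightarrow> ('i \<Rightarrow> ('k, 'a) module) \<Rightarrow> ('k, 'i \<Rightarrow> 'a) module" where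
  "R_alg K A Rs = (prod_alg K A Rs)\<lparr>carrier :=
     {f \<oplus>\<^bsub>prod_alg K A Rs\<^esub> (c \<odot>\<^bsub>prod_alg K A Rs\<^esub> \<one>\<^bsub>prod_alg K A Rs\<^esub>) | f c.
        f \<in> dsum_set A Rs \<and> c \<in> carrier K}\<rparr>"

end

theory Submission
  imports Defs
begin

text \<open>
  Both algebras are an ideal plus the scalar multiples of 1. In R every element is uniquely
  j + c 1 with j in J and c in K, because the isomorphism R/J = K maps the coset of j + c 1
  to c. In R(kappa,K,R) an element f + c 1 with f of finite support determines f and c: as A
  is infinite, some coordinate alpha lies outside the support, and there c 1 = d 1 in the
  nonzero algebra R_alpha forces c = d. Since (x + c 1)(y + d 1) = (x y + d x + c y) + c d 1
  in every K-algebra, the isomorphism h from J onto I of algebras without unit extends to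
  j + c 1 |-> h j + c 1, an isomorphism of unital K-algebras.
\<close>

lemma k_algebra_ring: "k_algebra K M \<Longrightarrow> ring M"
  and k_algebra_module: "k_algebra K M \<Longrightarrow> module K M"
  by (simp_all add: k_algebra_def)

lemma k_algebra_smult_mult:
  "\<lbrakk>k_algebra K M; a \<in> carrier K; x \<in> carrier M; y \<in> carrier M\<rbrakk> \<Longrightarrow>
    (a \<odot>\<^bsub>M\<^esub> x) \<otimes>\<^bsub>M\<^esub> y = a \<odot>\<^bsub>M\<^esub> (x \<otimes>\<^bsub>M\<^esub> y)"
  and k_algebra_mult_smult:
  "\<lbrakk>k_algebra K M; a \<in> carrier K; x \<in> carrier M; y \<in> carrier M\<rbrakk> \<Longrightarrow>
    x \<otimes>\<^bsub>M\<^esub> (a \<odot>\<^bsub>M\<^esub> y) = a \<odot>\<^bsub>M\<^esub> (x \<otimes>\<^bsub>M\<^esub> y)"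
  by (simp_all add: k_algebra_def)

lemma k_algebra_mult_plus_scalars:
  assumes alg: "k_algebra K M" and x: "x \<in> carrier M" and y: "y \<in> carrier M"
    and c: "c \<in> carrier K" and d: "d \<in> carrier K"
  shows "(x \<oplus>\<^bsub>M\<^esub> c \<odot>\<^bsub>M\<^esub> \<one>\<^bsub>M\<^esub>) \<otimes>\<^bsub>M\<^esub> (y \<oplus>\<^bsub>M\<^esub> d \<odot>\<^bsub>M\<^esub> \<one>\<^bsub>M\<^esub>)
       = ((x \<otimes>\<^bsub>M\<^esub> y \<oplus>\<^bsub>M\<^esub> d \<odot>\<^bsub>M\<^esub> x) \<oplus>\<^bsub>M\<^esub> c \<odot>\<^bsub>M\<^esub> y) \<oplus>\<^bsub>M\<^esub> (c \<otimes>\<^bsub>K\<^esub> d) \<odot>\<^bsub>M\<^esub> \<one>\<^bsub>M\<^esub>"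
proof -
  interpret M: ring M using k_algebra_ring[OF alg] .
  interpret KM: module K M using k_algebra_module[OF alg] .
  have "x \<otimes>\<^bsub>M\<^esub> (d \<odot>\<^bsub>M\<^esub> \<one>\<^bsub>M\<^esub>) = d \<odot>\<^bsub>M\<^esub> x"
    using k_algebra_mult_smult[OF alg d x M.one_closed] x by simp
  moreover have "(c \<odot>\<^bsub>M\<^esub> \<one>\<^bsub>M\<^esub>) \<otimes>\<^bsub>M\<^esub> y = c \<odot>\<^bsub>M\<^esub> y"
    using k_algebra_smult_mult[OF alg c M.one_closed y] y by simp
  moreover have "(c \<odot>\<^bsub>M\<^esub> \<one>\<^bsub>M\<^esub>) \<otimes>\<^bsub>M\<^esub> (d \<odot>\<^bsub>M\<^esub> \<one>\<^bsub>M\<^esub>) = (c \<otimes>\<^bsub>K\<^esub> d) \<odot>\<^bsub>M\<^esub> \<one>\<^bsub>M\<^esub>"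
    using k_algebra_smult_mult[OF alg c M.one_closed, of "d \<odot>\<^bsub>M\<^esub> \<one>\<^bsub>M\<^esub>"] KM.smult_assoc1[OF c d M.one_closed] d
    by simp
  ultimately show ?thesis
    using x y c d by (simp add: M.l_distr M.r_distr M.a_ac)
qed

lemma k_algebra_add_plus_scalars:
  assumes "k_algebra K M" and "x \<in> carrier M" and "y \<in> carrier M"
    and "c \<in> carrier K" and "d \<in> carrier K"
  shows "(x \<oplus>\<^bsub>M\<^esub> c \<odot>\<^bsub>M\<^esub> \<one>\<^bsub>M\<^esub>) \<oplus>\<^bsub>M\<^esub> (y \<oplus>\<^bsub>M\<^esub> d \<odot>\<^bsub>M\<^esub> \<one>\<^bsub>M\<^esub>)
       = (x \<oplus>\<^bsub>M\<^esub> y) \<oplus>\<^bsub>M\<^esub> (c \<oplus>\<^bsub>K\<^esub> d) \<odot>\<^bsub>M\<^esub> \<one>\<^bsub>M\<^esub>"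
proof -
  interpret M: ring M using k_algebra_ring[OF assms(1)] .
  interpret KM: module K M using k_algebra_module[OF assms(1)] .
  show ?thesis
    using assms by (simp add: KM.smult_l_distr M.a_ac)
qed

lemma k_algebra_smult_plus_scalars:
  assumes "k_algebra K M" and "x \<in> carrier M" and "c \<in> carrier K" and "a \<in> carrier K"
  shows "a \<odot>\<^bsub>M\<^esub> (x \<oplus>\<^bsub>M\<^esub> c \<odot>\<^bsub>M\<^esub> \<one>\<^bsub>M\<^esub>) = a \<odot>\<^bsub>M\<^esub> x \<oplus>\<^bsub>M\<^esub> (a \<otimes>\<^bsub>K\<^esub> c) \<odot>\<^bsub>M\<^esub> \<one>\<^bsub>M\<^esub>"
proof -
  interpret M: ring M using k_algebra_ring[OF assms(1)] .
  interpret KM: module K M using k_algebra_module[OF assms(1)] .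
  show ?thesis
    using assms by (simp add: KM.smult_r_distr KM.smult_assoc1)
qed

lemma k_algebra_ideal_smult_closed:
  assumes alg: "k_algebra K M" and "ideal J M" and c: "c \<in> carrier K" and j: "j \<in> J"
  shows "c \<odot>\<^bsub>M\<^esub> j \<in> J"
proof -
  interpret J: ideal J M by fact
  interpret KM: module K M using k_algebra_module[OF alg] .
  have "j \<in> carrier M" using j J.a_subset by blast
  then have "c \<odot>\<^bsub>M\<^esub> j = (c \<odot>\<^bsub>M\<^esub> \<one>\<^bsub>M\<^esub>) \<otimes>\<^bsub>M\<^esub> j"
    using k_algebra_smult_mult[OF alg c J.one_closed] by simp
  then show ?thesis using J.I_l_closed[OF j] c by simp
qed

lemma (in module) smult_right_cancel:
  assumes "field R" and x: "x \<in> carrier M" and nonzero: "x \<noteq> \<zero>\<^bsub>M\<^esub>"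
    and a: "a \<in> carrier R" and b: "b \<in> carrier R" and eq: "a \<odot>\<^bsub>M\<^esub> x = b \<odot>\<^bsub>M\<^esub> x"
  shows "a = b"
proof (rule ccontr)
  interpret F: field R by fact
  assume "a \<noteq> b"
  then have unit: "a \<ominus> b \<in> Units R"
    using a b by (simp add: F.field_Units)
  have "x = inv (a \<ominus> b) \<odot>\<^bsub>M\<^esub> ((a \<ominus> b) \<odot>\<^bsub>M\<^esub> x)"
    using smult_assoc1[OF Units_inv_closed[OF unit] Units_closed[OF unit] x] unit x
    by (simp add: Units_l_inv)
  also have "(a \<ominus> b) \<odot>\<^bsub>M\<^esub> x = \<zero>\<^bsub>M\<^esub>"
    using a b x eq by (simp add: a_minus_def smult_l_distr smult_l_minus M.r_neg)
  finally show False
    using nonzero unit by simp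
qed

lemma prod_alg_simps:
  "carrier (prod_alg K A Rs) = (\<Pi>\<^sub>E \<alpha>\<in>A. carrier (Rs \<alpha>))"
  "f \<otimes>\<^bsub>prod_alg K A Rs\<^esub> g = (\<lambda>\<alpha>\<in>A. f \<alpha> \<otimes>\<^bsub>Rs \<alpha>\<^esub> g \<alpha>)"
  "f \<oplus>\<^bsub>prod_alg K A Rs\<^esub> g = (\<lambda>\<alpha>\<in>A. f \<alpha> \<oplus>\<^bsub>Rs \<alpha>\<^esub> g \<alpha>)"
  "\<one>\<^bsub>prod_alg K A Rs\<^esub> = (\<lambda>\<alpha>\<in>A. \<one>\<^bsub>Rs \<alpha>\<^esub>)"
  "\<zero>\<^bsub>prod_alg K A Rs\<^esub> = (\<lambda>\<alpha>\<in>A. \<zero>\<^bsub>Rs \<alpha>\<^esub>)"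
  "c \<odot>\<^bsub>prod_alg K A Rs\<^esub> f = (\<lambda>\<alpha>\<in>A. c \<odot>\<^bsub>Rs \<alpha>\<^esub> f \<alpha>)"
  by (simp_all add: prod_alg_def)

lemma ring_prod_alg:
  assumes "\<And>\<alpha>. \<alpha> \<in> A \<Longrightarrow> ring (Rs \<alpha>)"
  shows "ring (prod_alg K A Rs)"
proof (rule ringI)
  show "abelian_group (prod_alg K A Rs)"
  proof (rule abelian_groupI)
    fix x assume "x \<in> carrier (prod_alg K A Rs)"
    then show "\<exists>y \<in> carrier (prod_alg K A Rs). y \<oplus>\<^bsub>prod_alg K A Rs\<^esub> x = \<zero>\<^bsub>prod_alg K A Rs\<^esub>"
      by (intro bexI[of _ "\<lambda>\<alpha>\<in>A. \<ominus>\<^bsub>Rs \<alpha>\<^esub> x \<alpha>"])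
        (auto simp: prod_alg_simps assms ring.ring_simprules PiE_iff cong: restrict_cong)
  qed (auto simp: prod_alg_simps assms ring.ring_simprules PiE_iff extensional_restrict
      cong: restrict_cong)
  show "monoid (prod_alg K A Rs)"
    by (rule monoidI) (auto simp: prod_alg_simps assms ring.ring_simprules monoid.r_one
        ring.is_monoid PiE_iff extensional_restrict cong: restrict_cong)
qed (auto simp: prod_alg_simps assms ring.ring_simprules PiE_iff cong: restrict_cong)

lemma k_algebra_prod_alg:
  assumes K: "field K" and alg: "\<And>\<alpha>. \<alpha> \<in> A \<Longrightarrow> k_algebra K (Rs \<alpha>)"
  shows "k_algebra K (prod_alg K A Rs)"
proof -
  have ring: "ring (prod_alg K A Rs)"
    using alg by (intro ring_prod_alg k_algebra_ring)
  have "module K (prod_alg K A Rs)"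
  proof (rule moduleI)
    show "cring K"
      using K by (rule domain.axioms(1)[OF field.axioms(1)])
    show "abelian_group (prod_alg K A Rs)"
      using ring by (rule ring.is_abelian_group)
  qed (auto simp: prod_alg_simps alg k_algebra_module k_algebra_ring ring.ring_simprules
      module.smult_closed[of K] module.smult_l_distr module.smult_r_distr[of K]
      module.smult_assoc1 module.smult_one PiE_iff extensional_restrict cong: restrict_cong)
  then show ?thesis
    using K ring unfolding k_algebra_def
    by (auto simp: prod_alg_simps alg k_algebra_smult_mult[of K] k_algebra_mult_smult[of K]
        k_algebra_module k_algebra_ring ring.ring_simprules module.smult_closed[of K] PiE_iff
        cong: restrict_cong)
qed

lemma dsum_set_subset_carrier: "dsum_set A Rs \<subseteq> carrier (prod_alg K A Rs)"
  by (auto simp: dsum_set_def prod_alg_simps)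

lemma inj_on_dsum_set_plus_scalars:
  assumes K: "field K" and A: "infinite A"
    and alg: "\<And>\<alpha>. \<alpha> \<in> A \<Longrightarrow> k_algebra K (Rs \<alpha>)"
    and nontrivial: "\<And>\<alpha>. \<alpha> \<in> A \<Longrightarrow> \<one>\<^bsub>Rs \<alpha>\<^esub> \<noteq> \<zero>\<^bsub>Rs \<alpha>\<^esub>"
  shows "inj_on (\<lambda>(f, c). f \<oplus>\<^bsub>prod_alg K A Rs\<^esub> c \<odot>\<^bsub>prod_alg K A Rs\<^esub> \<one>\<^bsub>prod_alg K A Rs\<^esub>)
           (dsum_set A Rs \<times> carrier K)"
proof -
  let ?P = "prod_alg K A Rs"
  interpret P: ring ?P using k_algebra_prod_alg[OF K alg] by (rule k_algebra_ring)
  interpret KP: module K ?P using k_algebra_prod_alg[OF K alg] by (rule k_algebra_module)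
  have "f = g \<and> c = d"
    if f: "f \<in> dsum_set A Rs" and c: "c \<in> carrier K" and g: "g \<in> dsum_set A Rs" and d: "d \<in> carrier K"
      and eq: "f \<oplus>\<^bsub>?P\<^esub> c \<odot>\<^bsub>?P\<^esub> \<one>\<^bsub>?P\<^esub> = g \<oplus>\<^bsub>?P\<^esub> d \<odot>\<^bsub>?P\<^esub> \<one>\<^bsub>?P\<^esub>" for f c g d
  proof -
    have "finite ({\<alpha>\<in>A. f \<alpha> \<noteq> \<zero>\<^bsub>Rs \<alpha>\<^esub>} \<union> {\<alpha>\<in>A. g \<alpha> \<noteq> \<zero>\<^bsub>Rs \<alpha>\<^esub>})"
      using f g by (simp add: dsum_set_def)
    then have "infinite (A - ({\<alpha>\<in>A. f \<alpha> \<noteq> \<zero>\<^bsub>Rs \<alpha>\<^esub>} \<union> {\<alpha>\<in>A. g \<alpha> \<noteq> \<zero>\<^bsub>Rs \<alpha>\<^esub>}))"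
      using A by (rule Diff_infinite_finite)
    then obtain \<alpha> where "\<alpha> \<in> A - ({\<alpha>\<in>A. f \<alpha> \<noteq> \<zero>\<^bsub>Rs \<alpha>\<^esub>} \<union> {\<alpha>\<in>A. g \<alpha> \<noteq> \<zero>\<^bsub>Rs \<alpha>\<^esub>})"
      using infinite_imp_nonempty by blast
    then have \<alpha>: "\<alpha> \<in> A" "f \<alpha> = \<zero>\<^bsub>Rs \<alpha>\<^esub>" "g \<alpha> = \<zero>\<^bsub>Rs \<alpha>\<^esub>"
      by auto
    interpret R\<alpha>: ring "Rs \<alpha>" using alg[OF \<alpha>(1)] by (rule k_algebra_ring)
    interpret KR\<alpha>: module K "Rs \<alpha>" using alg[OF \<alpha>(1)] by (rule k_algebra_module)
    have "c \<odot>\<^bsub>Rs \<alpha>\<^esub> \<one>\<^bsub>Rs \<alpha>\<^esub> = d \<odot>\<^bsub>Rs \<alpha>\<^esub> \<one>\<^bsub>Rs \<alpha>\<^esub>"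
      using fun_cong[OF eq, of \<alpha>] \<alpha> c d by (simp add: prod_alg_simps)
    then have "c = d"
      using KR\<alpha>.smult_right_cancel[OF K R\<alpha>.one_closed nontrivial[OF \<alpha>(1)] c d] by simp
    moreover have "f \<in> carrier ?P" "g \<in> carrier ?P"
      using f g dsum_set_subset_carrier by blast+
    ultimately show ?thesis
      using eq c by (simp add: P.add.right_cancel)
  qed
  then show ?thesis
    unfolding inj_on_def by fast
qed

lemma quot_alg_smult_coset:
  assumes alg: "k_algebra K M" and J: "ideal J M" and c: "c \<in> carrier K" and x: "x \<in> carrier M"
  shows "c \<odot>\<^bsub>quot_alg K M J\<^esub> (J +>\<^bsub>M\<^esub> x) = J +>\<^bsub>M\<^esub> (c \<odot>\<^bsub>M\<^esub> x)"
proof -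
  interpret J: ideal J M by fact
  interpret KM: module K M using alg by (rule k_algebra_module)
  have same: "J +>\<^bsub>M\<^esub> (c \<odot>\<^bsub>M\<^esub> y) = J +>\<^bsub>M\<^esub> (c \<odot>\<^bsub>M\<^esub> x)" if y: "y \<in> J +>\<^bsub>M\<^esub> x" for y
  proof -
    obtain j where j: "j \<in> J" "y = j \<oplus>\<^bsub>M\<^esub> x"
      using y unfolding a_r_coset_def' by blast
    have "j \<in> carrier M"
      using j(1) J.a_subset by blast
    then have "c \<odot>\<^bsub>M\<^esub> y = c \<odot>\<^bsub>M\<^esub> j \<oplus>\<^bsub>M\<^esub> c \<odot>\<^bsub>M\<^esub> x"
      using j(2) x c by (simp add: KM.smult_r_distr)
    then have "c \<odot>\<^bsub>M\<^esub> y \<in> J +>\<^bsub>M\<^esub> (c \<odot>\<^bsub>M\<^esub> x)"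
      using J.a_rcosI[OF k_algebra_ideal_smult_closed[OF alg J c j(1)] J.a_subset] x c by simp
    then show ?thesis
      using J.a_repr_independence[OF _ _ J.a_subgroup] x c by simp
  qed
  have "c \<odot>\<^bsub>quot_alg K M J\<^esub> (J +>\<^bsub>M\<^esub> x) = (\<Union>y\<in>J +>\<^bsub>M\<^esub> x. J +>\<^bsub>M\<^esub> (c \<odot>\<^bsub>M\<^esub> y))"
    by (simp add: quot_alg_def)
  also have "\<dots> = (\<Union>y\<in>J +>\<^bsub>M\<^esub> x. J +>\<^bsub>M\<^esub> (c \<odot>\<^bsub>M\<^esub> x))"
    using same by simp
  also have "\<dots> = J +>\<^bsub>M\<^esub> (c \<odot>\<^bsub>M\<^esub> x)"
    using J.a_rcos_self[OF x] by blast
  finally show ?thesis .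
qed

lemma alg_iso_quot_field_coset:
  assumes alg: "k_algebra K M" and J: "ideal J M"
    and \<psi>: "\<psi> \<in> alg_iso K (quot_alg K M J) (field_alg K)"
    and j: "j \<in> J" and c: "c \<in> carrier K"
  shows "\<psi> (J +>\<^bsub>M\<^esub> (j \<oplus>\<^bsub>M\<^esub> c \<odot>\<^bsub>M\<^esub> \<one>\<^bsub>M\<^esub>)) = c"
proof -
  interpret J: ideal J M by fact
  interpret KM: module K M using alg by (rule k_algebra_module)
  have \<psi>_smult: "\<psi> (a \<odot>\<^bsub>quot_alg K M J\<^esub> Y) = a \<otimes>\<^bsub>K\<^esub> \<psi> Y"
    if "a \<in> carrier K" "Y \<in> carrier (quot_alg K M J)" for a Y
    using \<psi> that unfolding alg_iso_def by (simp add: field_alg_def)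
  have \<psi>_one: "\<psi> (J +>\<^bsub>M\<^esub> \<one>\<^bsub>M\<^esub>) = \<one>\<^bsub>K\<^esub>"
    using \<psi> unfolding alg_iso_def ring_iso_def ring_hom_def
    by (simp add: quot_alg_def FactRing_def field_alg_def)
  have one: "J +>\<^bsub>M\<^esub> \<one>\<^bsub>M\<^esub> \<in> carrier (quot_alg K M J)"
    using J.a_rcosetsI[OF J.a_subset J.one_closed] by (simp add: quot_alg_def FactRing_def)
  have "J +>\<^bsub>M\<^esub> (j \<oplus>\<^bsub>M\<^esub> c \<odot>\<^bsub>M\<^esub> \<one>\<^bsub>M\<^esub>) = J +>\<^bsub>M\<^esub> (c \<odot>\<^bsub>M\<^esub> \<one>\<^bsub>M\<^esub>)"
    using J.a_repr_independence[OF J.a_rcosI[OF j J.a_subset] _ J.a_subgroup] c by simp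
  also have "\<dots> = c \<odot>\<^bsub>quot_alg K M J\<^esub> (J +>\<^bsub>M\<^esub> \<one>\<^bsub>M\<^esub>)"
    using quot_alg_smult_coset[OF alg J c J.one_closed] by simp
  finally show ?thesis
    using \<psi>_smult[OF c one] \<psi>_one c by simp
qed

lemma alg_iso_quot_field_decomp:
  assumes alg: "k_algebra K M" and J: "ideal J M"
    and \<psi>: "\<psi> \<in> alg_iso K (quot_alg K M J) (field_alg K)" and r: "r \<in> carrier M"
  shows "\<psi> (J +>\<^bsub>M\<^esub> r) \<in> carrier K"
    and "\<exists>j\<in>J. r = j \<oplus>\<^bsub>M\<^esub> \<psi> (J +>\<^bsub>M\<^esub> r) \<odot>\<^bsub>M\<^esub> \<one>\<^bsub>M\<^esub>"
proof -
  interpret J: ideal J M by fact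
  interpret KM: module K M using alg by (rule k_algebra_module)
  have \<psi>_bij: "bij_betw \<psi> (a_rcosets\<^bsub>M\<^esub> J) (carrier K)"
    using \<psi> by (simp add: alg_iso_def ring_iso_def quot_alg_def FactRing_def field_alg_def)
  have coset: "J +>\<^bsub>M\<^esub> r \<in> a_rcosets\<^bsub>M\<^esub> J"
    using J.a_rcosetsI[OF J.a_subset r] .
  define c where "c = \<psi> (J +>\<^bsub>M\<^esub> r)"
  show c: "\<psi> (J +>\<^bsub>M\<^esub> r) \<in> carrier K"
    using bij_betw_apply[OF \<psi>_bij coset] .
  have "\<zero>\<^bsub>M\<^esub> \<in> J"
    by simp
  from alg_iso_quot_field_coset[OF alg J \<psi> this c]
  have "\<psi> (J +>\<^bsub>M\<^esub> (c \<odot>\<^bsub>M\<^esub> \<one>\<^bsub>M\<^esub>)) = \<psi> (J +>\<^bsub>M\<^esub> r)"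
    using c by (simp add: c_def)
  then have "J +>\<^bsub>M\<^esub> (c \<odot>\<^bsub>M\<^esub> \<one>\<^bsub>M\<^esub>) = J +>\<^bsub>M\<^esub> r"
    using inj_onD[OF bij_betw_imp_inj_on[OF \<psi>_bij]] coset J.a_rcosetsI[OF J.a_subset] c
    by (simp add: c_def)
  then have "r \<in> J +>\<^bsub>M\<^esub> (c \<odot>\<^bsub>M\<^esub> \<one>\<^bsub>M\<^esub>)"
    using J.a_rcos_self[OF r] by simp
  then show "\<exists>j\<in>J. r = j \<oplus>\<^bsub>M\<^esub> \<psi> (J +>\<^bsub>M\<^esub> r) \<odot>\<^bsub>M\<^esub> \<one>\<^bsub>M\<^esub>"
    by (auto simp: a_r_coset_def' c_def)
qed

lemma bij_betw_ideal_plus_scalars: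
  assumes alg: "k_algebra K M" and J: "ideal J M"
    and iso: "alg_iso K (quot_alg K M J) (field_alg K) \<noteq> {}"
  shows "bij_betw (\<lambda>(j, c). j \<oplus>\<^bsub>M\<^esub> c \<odot>\<^bsub>M\<^esub> \<one>\<^bsub>M\<^esub>) (J \<times> carrier K) (carrier M)"
proof -
  interpret J: ideal J M by fact
  interpret KM: module K M using alg by (rule k_algebra_module)
  obtain \<psi> where \<psi>: "\<psi> \<in> alg_iso K (quot_alg K M J) (field_alg K)"
    using iso by blast
  have "inj_on (\<lambda>(j, c). j \<oplus>\<^bsub>M\<^esub> c \<odot>\<^bsub>M\<^esub> \<one>\<^bsub>M\<^esub>) (J \<times> carrier K)"
  proof (rule inj_onI, clarify)
    fix j c j' d
    assume j: "j \<in> J" "j' \<in> J" and c: "c \<in> carrier K" "d \<in> carrier K"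
      and eq: "j \<oplus>\<^bsub>M\<^esub> c \<odot>\<^bsub>M\<^esub> \<one>\<^bsub>M\<^esub> = j' \<oplus>\<^bsub>M\<^esub> d \<odot>\<^bsub>M\<^esub> \<one>\<^bsub>M\<^esub>"
    have "c = d"
      using alg_iso_quot_field_coset[OF alg J \<psi>] j c eq by metis
    then show "j = j' \<and> c = d"
      using eq j c J.a_subset by (auto simp: J.add.right_cancel)
  qed
  moreover have "carrier M \<subseteq> (\<lambda>(j, c). j \<oplus>\<^bsub>M\<^esub> c \<odot>\<^bsub>M\<^esub> \<one>\<^bsub>M\<^esub>) ` (J \<times> carrier K)"
  proof
    fix r assume r: "r \<in> carrier M"
    then obtain j where "j \<in> J" "r = j \<oplus>\<^bsub>M\<^esub> \<psi> (J +>\<^bsub>M\<^esub> r) \<odot>\<^bsub>M\<^esub> \<one>\<^bsub>M\<^esub>"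
      using alg_iso_quot_field_decomp(2)[OF alg J \<psi>] by blast
    then show "r \<in> (\<lambda>(j, c). j \<oplus>\<^bsub>M\<^esub> c \<odot>\<^bsub>M\<^esub> \<one>\<^bsub>M\<^esub>) ` (J \<times> carrier K)"
      using alg_iso_quot_field_decomp(1)[OF alg J \<psi> r] by (intro image_eqI) auto
  qed
  moreover have "(\<lambda>(j, c). j \<oplus>\<^bsub>M\<^esub> c \<odot>\<^bsub>M\<^esub> \<one>\<^bsub>M\<^esub>) ` (J \<times> carrier K) \<subseteq> carrier M"
    using J.a_subset by auto
  ultimately show ?thesis
    unfolding bij_betw_def by blast
qed

locale unitization_iso =
  fixes K :: "('k, 'm) ring_scheme" and M :: "('k, 'a) module" and N :: "('k, 'b) module"
    and J :: "'a set" and S :: "'b set" and h :: "'a \<Rightarrow> 'b"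
  assumes M_alg: "k_algebra K M" and N_alg: "k_algebra K N" and J_ideal: "ideal J M"
    and M_decomp: "bij_betw (\<lambda>(j, c). j \<oplus>\<^bsub>M\<^esub> c \<odot>\<^bsub>M\<^esub> \<one>\<^bsub>M\<^esub>) (J \<times> carrier K) (carrier M)"
    and h_iso: "h \<in> nonunital_alg_iso K M J N S"
    and S_carrier: "S \<subseteq> carrier N"
    and N_direct: "inj_on (\<lambda>(s, c). s \<oplus>\<^bsub>N\<^esub> c \<odot>\<^bsub>N\<^esub> \<one>\<^bsub>N\<^esub>) (S \<times> carrier K)"
begin

sublocale M: ring M using M_alg by (rule k_algebra_ring)
sublocale N: ring N using N_alg by (rule k_algebra_ring)
sublocale KM: module K M using M_alg by (rule k_algebra_module)
sublocale KN: module K N using N_alg by (rule k_algebra_module)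
sublocale J: ideal J M by (rule J_ideal)

lemma h_bij: "bij_betw h J S"
  and h_add: "\<lbrakk>x \<in> J; y \<in> J\<rbrakk> \<Longrightarrow> h (x \<oplus>\<^bsub>M\<^esub> y) = h x \<oplus>\<^bsub>N\<^esub> h y"
  and h_mult: "\<lbrakk>x \<in> J; y \<in> J\<rbrakk> \<Longrightarrow> h (x \<otimes>\<^bsub>M\<^esub> y) = h x \<otimes>\<^bsub>N\<^esub> h y"
  and h_smult: "\<lbrakk>a \<in> carrier K; x \<in> J\<rbrakk> \<Longrightarrow> h (a \<odot>\<^bsub>M\<^esub> x) = a \<odot>\<^bsub>N\<^esub> h x"
  using h_iso by (simp_all add: nonunital_alg_iso_def)

lemma h_carrier: "x \<in> J \<Longrightarrow> h x \<in> carrier N"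
  using bij_betw_apply[OF h_bij] S_carrier by blast

lemma h_zero: "h \<zero>\<^bsub>M\<^esub> = \<zero>\<^bsub>N\<^esub>"
proof -
  have "h \<zero>\<^bsub>M\<^esub> \<oplus>\<^bsub>N\<^esub> h \<zero>\<^bsub>M\<^esub> = \<zero>\<^bsub>N\<^esub> \<oplus>\<^bsub>N\<^esub> h \<zero>\<^bsub>M\<^esub>"
    using h_add[of "\<zero>\<^bsub>M\<^esub>" "\<zero>\<^bsub>M\<^esub>"] h_carrier[of "\<zero>\<^bsub>M\<^esub>"] by simp
  then show ?thesis
    using h_carrier[of "\<zero>\<^bsub>M\<^esub>"] by (simp add: N.add.right_cancel)
qed

lemma M_decompE:
  assumes "x \<in> carrier M"
  obtains j c where "j \<in> J" "c \<in> carrier K" "x = j \<oplus>\<^bsub>M\<^esub> c \<odot>\<^bsub>M\<^esub> \<one>\<^bsub>M\<^esub>"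
proof -
  have "x \<in> (\<lambda>(j, c). j \<oplus>\<^bsub>M\<^esub> c \<odot>\<^bsub>M\<^esub> \<one>\<^bsub>M\<^esub>) ` (J \<times> carrier K)"
    using assms M_decomp by (simp add: bij_betw_def)
  then show thesis
    using that by auto
qed

definition extension :: "'a \<Rightarrow> 'b" where
  "extension = (\<lambda>(j, c). h j \<oplus>\<^bsub>N\<^esub> c \<odot>\<^bsub>N\<^esub> \<one>\<^bsub>N\<^esub>) \<circ>
     the_inv_into (J \<times> carrier K) (\<lambda>(j, c). j \<oplus>\<^bsub>M\<^esub> c \<odot>\<^bsub>M\<^esub> \<one>\<^bsub>M\<^esub>)"

lemma extension_eq:
  "\<lbrakk>j \<in> J; c \<in> carrier K\<rbrakk> \<Longrightarrow>
    extension (j \<oplus>\<^bsub>M\<^esub> c \<odot>\<^bsub>M\<^esub> \<one>\<^bsub>M\<^esub>) = h j \<oplus>\<^bsub>N\<^esub> c \<odot>\<^bsub>N\<^esub> \<one>\<^bsub>N\<^esub>"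
  using the_inv_into_f_f[OF bij_betw_imp_inj_on[OF M_decomp], of "(j, c)"]
  by (simp add: extension_def)

lemma extension_bij:
  "bij_betw extension (carrier M) {s \<oplus>\<^bsub>N\<^esub> c \<odot>\<^bsub>N\<^esub> \<one>\<^bsub>N\<^esub> | s c. s \<in> S \<and> c \<in> carrier K}"
proof -
  have "bij_betw (\<lambda>(s, c). s \<oplus>\<^bsub>N\<^esub> c \<odot>\<^bsub>N\<^esub> \<one>\<^bsub>N\<^esub>) (S \<times> carrier K)
      {s \<oplus>\<^bsub>N\<^esub> c \<odot>\<^bsub>N\<^esub> \<one>\<^bsub>N\<^esub> | s c. s \<in> S \<and> c \<in> carrier K}"
    using N_direct unfolding bij_betw_def by auto
  then have "bij_betw ((\<lambda>(s, c). s \<oplus>\<^bsub>N\<^esub> c \<odot>\<^bsub>N\<^esub> \<one>\<^bsub>N\<^esub>) \<circ> map_prod h id) (J \<times> carrier K)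
      {s \<oplus>\<^bsub>N\<^esub> c \<odot>\<^bsub>N\<^esub> \<one>\<^bsub>N\<^esub> | s c. s \<in> S \<and> c \<in> carrier K}"
    using bij_betw_map_prod[OF h_bij bij_betw_id] by (rule bij_betw_trans[rotated])
  then show ?thesis
    using bij_betw_trans[OF bij_betw_the_inv_into[OF M_decomp]]
    by (simp add: extension_def comp_def case_prod_beta)
qed

lemma extension_mult:
  assumes x: "x \<in> carrier M" and y: "y \<in> carrier M"
  shows "extension (x \<otimes>\<^bsub>M\<^esub> y) = extension x \<otimes>\<^bsub>N\<^esub> extension y"
proof -
  obtain j c where j: "j \<in> J" and c: "c \<in> carrier K" and x_eq: "x = j \<oplus>\<^bsub>M\<^esub> c \<odot>\<^bsub>M\<^esub> \<one>\<^bsub>M\<^esub>"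
    using x by (rule M_decompE)
  obtain j' d where j': "j' \<in> J" and d: "d \<in> carrier K" and y_eq: "y = j' \<oplus>\<^bsub>M\<^esub> d \<odot>\<^bsub>M\<^esub> \<one>\<^bsub>M\<^esub>"
    using y by (rule M_decompE)
  have jM: "j \<in> carrier M" "j' \<in> carrier M"
    using j j' J.a_subset by blast+
  have smult_J: "d \<odot>\<^bsub>M\<^esub> j \<in> J" "c \<odot>\<^bsub>M\<^esub> j' \<in> J"
    using k_algebra_ideal_smult_closed[OF M_alg J_ideal] j j' c d by blast+
  have jj: "j \<otimes>\<^bsub>M\<^esub> j' \<in> J"
    using J.I_r_closed[OF j jM(2)] .
  let ?i = "(j \<otimes>\<^bsub>M\<^esub> j' \<oplus>\<^bsub>M\<^esub> d \<odot>\<^bsub>M\<^esub> j) \<oplus>\<^bsub>M\<^esub> c \<odot>\<^bsub>M\<^esub> j'"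
  have i: "?i \<in> J"
    using jj smult_J by simp
  have "extension (x \<otimes>\<^bsub>M\<^esub> y) = h ?i \<oplus>\<^bsub>N\<^esub> (c \<otimes>\<^bsub>K\<^esub> d) \<odot>\<^bsub>N\<^esub> \<one>\<^bsub>N\<^esub>"
    unfolding x_eq y_eq k_algebra_mult_plus_scalars[OF M_alg jM c d]
    using extension_eq[OF i] c d by simp
  also have "h ?i = (h j \<otimes>\<^bsub>N\<^esub> h j' \<oplus>\<^bsub>N\<^esub> d \<odot>\<^bsub>N\<^esub> h j) \<oplus>\<^bsub>N\<^esub> c \<odot>\<^bsub>N\<^esub> h j'"
    using jj smult_J j j' c d by (simp add: h_add h_mult h_smult)
  also have "\<dots> \<oplus>\<^bsub>N\<^esub> (c \<otimes>\<^bsub>K\<^esub> d) \<odot>\<^bsub>N\<^esub> \<one>\<^bsub>N\<^esub> = extension x \<otimes>\<^bsub>N\<^esub> extension y"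
    unfolding x_eq y_eq extension_eq[OF j c] extension_eq[OF j' d]
    using k_algebra_mult_plus_scalars[OF N_alg h_carrier[OF j] h_carrier[OF j'] c d] by simp
  finally show ?thesis .
qed

lemma extension_add:
  assumes x: "x \<in> carrier M" and y: "y \<in> carrier M"
  shows "extension (x \<oplus>\<^bsub>M\<^esub> y) = extension x \<oplus>\<^bsub>N\<^esub> extension y"
proof -
  obtain j c where j: "j \<in> J" and c: "c \<in> carrier K" and x_eq: "x = j \<oplus>\<^bsub>M\<^esub> c \<odot>\<^bsub>M\<^esub> \<one>\<^bsub>M\<^esub>"
    using x by (rule M_decompE)
  obtain j' d where j': "j' \<in> J" and d: "d \<in> carrier K" and y_eq: "y = j' \<oplus>\<^bsub>M\<^esub> d \<odot>\<^bsub>M\<^esub> \<one>\<^bsub>M\<^esub>"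
    using y by (rule M_decompE)
  have jM: "j \<in> carrier M" "j' \<in> carrier M"
    using j j' J.a_subset by blast+
  have "extension (x \<oplus>\<^bsub>M\<^esub> y) = h (j \<oplus>\<^bsub>M\<^esub> j') \<oplus>\<^bsub>N\<^esub> (c \<oplus>\<^bsub>K\<^esub> d) \<odot>\<^bsub>N\<^esub> \<one>\<^bsub>N\<^esub>"
    unfolding x_eq y_eq k_algebra_add_plus_scalars[OF M_alg jM c d]
    using extension_eq j j' c d by simp
  also have "\<dots> = extension x \<oplus>\<^bsub>N\<^esub> extension y"
    unfolding x_eq y_eq extension_eq[OF j c] extension_eq[OF j' d] h_add[OF j j']
    using k_algebra_add_plus_scalars[OF N_alg h_carrier[OF j] h_carrier[OF j'] c d] by simp
  finally show ?thesis .
qed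

lemma extension_smult:
  assumes a: "a \<in> carrier K" and x: "x \<in> carrier M"
  shows "extension (a \<odot>\<^bsub>M\<^esub> x) = a \<odot>\<^bsub>N\<^esub> extension x"
proof -
  obtain j c where j: "j \<in> J" and c: "c \<in> carrier K" and x_eq: "x = j \<oplus>\<^bsub>M\<^esub> c \<odot>\<^bsub>M\<^esub> \<one>\<^bsub>M\<^esub>"
    using x by (rule M_decompE)
  have jM: "j \<in> carrier M"
    using j J.a_subset by blast
  have aj: "a \<odot>\<^bsub>M\<^esub> j \<in> J"
    using k_algebra_ideal_smult_closed[OF M_alg J_ideal a j] .
  have "extension (a \<odot>\<^bsub>M\<^esub> x) = h (a \<odot>\<^bsub>M\<^esub> j) \<oplus>\<^bsub>N\<^esub> (a \<otimes>\<^bsub>K\<^esub> c) \<odot>\<^bsub>N\<^esub> \<one>\<^bsub>N\<^esub>"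
    unfolding x_eq k_algebra_smult_plus_scalars[OF M_alg jM c a]
    using extension_eq[OF aj] a c by simp
  also have "\<dots> = a \<odot>\<^bsub>N\<^esub> extension x"
    unfolding x_eq extension_eq[OF j c] h_smult[OF a j]
    using k_algebra_smult_plus_scalars[OF N_alg h_carrier[OF j] c a] by simp
  finally show ?thesis .
qed

lemma extension_one: "extension \<one>\<^bsub>M\<^esub> = \<one>\<^bsub>N\<^esub>"
  using extension_eq[of "\<zero>\<^bsub>M\<^esub>" "\<one>\<^bsub>K\<^esub>"] by (simp add: h_zero)

lemma extension_alg_iso:
  "extension \<in> alg_iso K M (N\<lparr>carrier := {s \<oplus>\<^bsub>N\<^esub> c \<odot>\<^bsub>N\<^esub> \<one>\<^bsub>N\<^esub> | s c. s \<in> S \<and> c \<in> carrier K}\<rparr>)"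
  using extension_bij bij_betw_apply[OF extension_bij]
  by (simp add: alg_iso_def ring_iso_def ring_hom_def extension_mult extension_add
      extension_smult extension_one)

end

theorem lemma4p5:
  fixes K :: "('k, 'm) ring_scheme"
    and A :: "'i set"
    and Rs :: "'i \<Rightarrow> ('k, 'a) module"
    and R :: "('k, 'b) module"
    and J :: "'b set"
  assumes "field K"
    and "infinite A"
    and "\<And>\<alpha>. \<alpha> \<in> A \<Longrightarrow> k_algebra K (Rs \<alpha>)"
    and "\<And>\<alpha>. \<alpha> \<in> A \<Longrightarrow> \<one>\<^bsub>Rs \<alpha>\<^esub> \<noteq> \<zero>\<^bsub>Rs \<alpha>\<^esub>"
    and "k_algebra K R"
    and "ideal J R"
    and "nonunital_alg_iso K R J (prod_alg K A Rs) (dsum_set A Rs) \<noteq> {}"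
    and "alg_iso K (quot_alg K R J) (field_alg K) \<noteq> {}"
  shows "alg_iso K R (R_alg K A Rs) \<noteq> {}"
proof -
  obtain h where h: "h \<in> nonunital_alg_iso K R J (prod_alg K A Rs) (dsum_set A Rs)"
    using assms(7) by blast
  interpret unitization_iso K R "prod_alg K A Rs" J "dsum_set A Rs" h
    using assms(5) k_algebra_prod_alg[OF assms(1,3)] assms(6)
      bij_betw_ideal_plus_scalars[OF assms(5,6,8)] h dsum_set_subset_carrier
      inj_on_dsum_set_plus_scalars[OF assms(1-4)]
    by (rule unitization_iso.intro)
  show ?thesis
    using extension_alg_iso by (auto simp: R_alg_def)
qed

end
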